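(* Let $q$ be a square prime power and let $\mathcal{B}$ be a Baer subplane of $PG(2,q)$; let $n=q+\sqrt{q}+1$. Then $\mathcal{B}$ is an optimal $(1,\mu)$-saturating $n$-set with $\mu=\frac{1}{2}(q+\sqrt{q})$. A linear code $C$ over $\mathbb{F}_q$ corresponding to $\mathcal{B}$ is an $[n,n-3,3]_q$ code with covering radius $2$, and it is a $(2,\mu)$-APMCF code.
   Context: $PG(N,q)$ is the $N$-dimensional projective space over $\mathbb{F}_q$. A Baer subplane of $PG(2,q)$, $q$ a square, is a subplane of order $\sqrt q$ (e.g. the set of points having homogeneous coordinates in $\mathbb{F}_{\sqrt q}$). For a point set $S$, a secant of $S$ is a line $\ell$ with $|\ell\cap S|\ge2$, counted with multiplicity $\binom{|\ell\cap S|}{2}$. A set $S$ of $n$ points of $PG(N,q)$ is a $(1,\mu)$-saturating $n$-set if (M1) $S$ spans $PG(N,q)$, (M2) $S\neq PG(N,q)$, and (M3) every point $Q\notin S$ lies on secants of $S$ whose multiplicities sum to at least $\mu$; it is optimal if for every $Q\notin S$ this sum is exactly $\mu$. A linear code of length $n$ over $\mathbb{F}_q$ corresponds to $S=\{P_1,\dots,P_n\}\subset PG(N,q)$ if it has a parity-check matrix whose $i$-th column is a homogeneous coordinate vector of $P_i$. An $[n,k,d]_q$ code is a linear code of length $n$, dimension $k$ and minimum distance $d$; its covering radius $R$ is $\max_{x\in\mathbb{F}_q^n} d(x,C)$ (Hamming distance). A code $C$ with covering radius $R$ is an $(R,\mu)$-APMCF code if every $x\in\mathbb{F}_q^n$ with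 $d(x,C)=R$ is at distance exactly $R$ from exactly $\mu$ codewords. *)

theory Defs
  imports "HOL-Analysis.Analysis"
begin

section \<open>The projective plane PG(2,q), q = CARD('a)\<close>

definition proj_point :: "('a::field) ^ 3 \<Rightarrow> ('a ^ 3) set" where
  "proj_point v = {c *s v | c. c \<noteq> 0}"

definition PG2 :: "(('a::{field,finite}) ^ 3) set set" where
  "PG2 = {proj_point v | v. v \<noteq> 0}"

definition line_of :: "('a::{field,finite}) ^ 3 \<Rightarrow> ('a ^ 3) set set" where
  "line_of u = {P \<in> PG2. \<exists>v\<in>P. (\<Sum>i\<in>UNIV. u $ i * v $ i) = 0}"

definition PG2_lines :: "(('a::{field,finite}) ^ 3) set set set" where
  "PG2_lines = {line_of u | u. u \<noteq> 0}"

definition collinear3 :: "(('a::{field,finite}) ^ 3) set \<Rightarrow> ('a ^ 3) set \<Rightarrow> ('a ^ 3) set \<Rightarrow> bool" where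
  "collinear3 P Q R \<longleftrightarrow> (\<exists>l\<in>PG2_lines. P \<in> l \<and> Q \<in> l \<and> R \<in> l)"

definition reps :: "(('a::{field,finite}) ^ 3) set set \<Rightarrow> ('a ^ 3) set" where
  "reps S = {v. v \<noteq> 0 \<and> proj_point v \<in> S}"

definition spans_PG2 :: "(('a::{field,finite}) ^ 3) set set \<Rightarrow> bool" where
  "spans_PG2 S \<longleftrightarrow> (\<forall>w::'a^3. \<exists>c. w = (\<Sum>v\<in>reps S. c v *s v))"

text \<open>B (with the lines of PG(2,q) meeting it in at least two points, restricted to B) is a
  projective plane of order m: every such line has m+1 points of B, any two distinct such lines meet
  in a point of B, and B contains four points no three of which are collinear.\<close>

definition subplane_of_order :: "(('a::{field,finite}) ^ 3) set set \<Rightarrow> nat \<Rightarrow> bool" where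
  "subplane_of_order B m \<longleftrightarrow>
     B \<subseteq> PG2 \<and>
     (\<forall>l\<in>PG2_lines. card (l \<inter> B) \<ge> 2 \<longrightarrow> card (l \<inter> B) = m + 1) \<and>
     (\<forall>l1\<in>PG2_lines. \<forall>l2\<in>PG2_lines.
        card (l1 \<inter> B) \<ge> 2 \<and> card (l2 \<inter> B) \<ge> 2 \<and> l1 \<inter> B \<noteq> l2 \<inter> B
        \<longrightarrow> l1 \<inter> l2 \<inter> B \<noteq> {}) \<and>
     (\<exists>P1 P2 P3 P4. {P1, P2, P3, P4} \<subseteq> B \<and> card {P1, P2, P3, P4} = 4 \<and>
        \<not> collinear3 P1 P2 P3 \<and> \<not> collinear3 P1 P2 P4 \<and>
        \<not> collinear3 P1 P3 P4 \<and> \<not> collinear3 P2 P3 P4)"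

definition baer_subplane :: "(('a::{field,finite}) ^ 3) set set \<Rightarrow> bool" where
  "baer_subplane B \<longleftrightarrow> (\<exists>r. CARD('a) = r ^ 2 \<and> subplane_of_order B r)"

definition secant_mult :: "(('a::{field,finite}) ^ 3) set set \<Rightarrow> ('a ^ 3) set \<Rightarrow> nat" where
  "secant_mult S Q = (\<Sum>l\<in>{l \<in> PG2_lines. Q \<in> l}. card (l \<inter> S) choose 2)"

definition saturating_1mu :: "(('a::{field,finite}) ^ 3) set set \<Rightarrow> nat \<Rightarrow> nat \<Rightarrow> bool" where
  "saturating_1mu S n \<mu> \<longleftrightarrow> S \<subseteq> PG2 \<and> card S = n \<and>
     spans_PG2 S \<and> S \<noteq> PG2 \<and> (\<forall>Q\<in>PG2 - S. secant_mult S Q \<ge> \<mu>)"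

definition optimal_saturating_1mu :: "(('a::{field,finite}) ^ 3) set set \<Rightarrow> nat \<Rightarrow> nat \<Rightarrow> bool" where
  "optimal_saturating_1mu S n \<mu> \<longleftrightarrow> saturating_1mu S n \<mu> \<and> (\<forall>Q\<in>PG2 - S. secant_mult S Q = \<mu>)"

definition words :: "nat \<Rightarrow> (nat \<Rightarrow> 'a::zero) set" where
  "words n = {x. \<forall>i\<ge>n. x i = 0}"

definition hamming :: "nat \<Rightarrow> (nat \<Rightarrow> 'a) \<Rightarrow> (nat \<Rightarrow> 'a) \<Rightarrow> nat" where
  "hamming n x y = card {i. i < n \<and> x i \<noteq> y i}"

definition linear_code :: "nat \<Rightarrow> (nat \<Rightarrow> 'a::field) set \<Rightarrow> bool" where
  "linear_code n C \<longleftrightarrow> C \<subseteq> words n \<and> (\<lambda>_. 0) \<in> C \<and>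
     (\<forall>x\<in>C. \<forall>y\<in>C. (\<lambda>i. x i + y i) \<in> C) \<and> (\<forall>c. \<forall>x\<in>C. (\<lambda>i. c * x i) \<in> C)"

definition code_dim :: "(nat \<Rightarrow> 'a::{field,finite}) set \<Rightarrow> nat \<Rightarrow> bool" where
  "code_dim C k \<longleftrightarrow> card C = CARD('a) ^ k"

definition min_dist :: "nat \<Rightarrow> (nat \<Rightarrow> 'a) set \<Rightarrow> nat" where
  "min_dist n C = Min {hamming n x y | x y. x \<in> C \<and> y \<in> C \<and> x \<noteq> y}"

definition nkd_code :: "nat \<Rightarrow> nat \<Rightarrow> nat \<Rightarrow> (nat \<Rightarrow> 'a::{field,finite}) set \<Rightarrow> bool" where
  "nkd_code n k d C \<longleftrightarrow> linear_code n C \<and> code_dim C k \<and> min_dist n C = d"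

definition dist_to_code :: "nat \<Rightarrow> (nat \<Rightarrow> 'a) set \<Rightarrow> (nat \<Rightarrow> 'a) \<Rightarrow> nat" where
  "dist_to_code n C x = Min {hamming n x c | c. c \<in> C}"

definition covering_radius :: "nat \<Rightarrow> (nat \<Rightarrow> 'a::zero) set \<Rightarrow> nat" where
  "covering_radius n C = Max {dist_to_code n C x | x. x \<in> words n}"

definition APMCF :: "nat \<Rightarrow> (nat \<Rightarrow> 'a::zero) set \<Rightarrow> nat \<Rightarrow> nat \<Rightarrow> bool" where
  "APMCF n C R \<mu> \<longleftrightarrow> covering_radius n C = R \<and>
     (\<forall>x\<in>words n. dist_to_code n C x = R \<longrightarrow> card {c \<in> C. hamming n x c = R} = \<mu>)"

definition parity_check_code :: "nat \<Rightarrow> (nat \<Rightarrow> ('a::field) ^ 3) \<Rightarrow> (nat \<Rightarrow> 'a) set" where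
  "parity_check_code n h = {x \<in> words n. (\<Sum>i<n. x i *s h i) = 0}"

definition columns_of :: "(('a::{field,finite}) ^ 3) set set \<Rightarrow> nat \<Rightarrow> (nat \<Rightarrow> 'a ^ 3) \<Rightarrow> bool" where
  "columns_of S n h \<longleftrightarrow> (\<forall>i<n. h i \<noteq> 0) \<and> inj_on (\<lambda>i. proj_point (h i)) {..<n} \<and>
     (\<lambda>i. proj_point (h i)) ` {..<n} = S"

end

theory Submission
  imports Defs
begin

text \<open>A point Q outside the Baer subplane B lies on exactly one secant of B: otherwise projecting
  B from Q onto a secant not through Q would be injective, but B has r^2 + r + 1 points and a line
  only r^2 + 1. That secant meets B in r + 1 points, so the secant multiplicities at Q add up to
  (r + 1 choose 2) = mu.

  For the code, syndromes are vectors of F_q^3. A syndrome is reached by a word of weight at most 1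
  iff it is 0 or represents a point of B; any other syndrome s is reached by words of weight 2, and
  these correspond to the pairs of points of B on the unique secant through the point of s. Hence
  R = 2 and every word at distance 2 from the code has exactly mu nearest codewords. No two columns
  are proportional, while three points of B on a secant give dependent columns, so d = 3; a triangle
  of B spans F_q^3, so the syndrome map is onto and k = n - 3.\<close>

text \<open>HOL-Analysis only provides inner and cross3 over the reals.\<close>

definition dotp :: "'a::comm_ring_1 ^ 3 \<Rightarrow> 'a ^ 3 \<Rightarrow> 'a" where
  "dotp u v = (\<Sum>i\<in>UNIV. u $ i * v $ i)"

definition crossp :: "'a::comm_ring_1 ^ 3 \<Rightarrow> 'a ^ 3 \<Rightarrow> 'a ^ 3" where
  "crossp v w = vector [v$2 * w$3 - v$3 * w$2, v$3 * w$1 - v$1 * w$3, v$1 * w$2 - v$2 * w$1]"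

lemma vec3_eq_iff: "x = y \<longleftrightarrow> x$1 = y$1 \<and> x$2 = y$2 \<and> x$3 = y$3"
  for x y :: "'a ^ 3"
  by (simp add: vec_eq_iff forall_3)

lemma dotp_expand: "dotp u v = u$1 * v$1 + u$2 * v$2 + u$3 * v$3"
  by (simp add: dotp_def sum_3)

lemma crossp_nth [simp]:
  "crossp v w $ 1 = v$2 * w$3 - v$3 * w$2"
  "crossp v w $ 2 = v$3 * w$1 - v$1 * w$3"
  "crossp v w $ 3 = v$1 * w$2 - v$2 * w$1"
  by (simp_all add: crossp_def)

lemma dotp_commute: "dotp u v = dotp v u"
  by (simp add: dotp_def mult.commute)

lemma dotp_simps [simp]:
  "dotp u (c *s v) = c * dotp u v"
  "dotp (c *s u) v = c * dotp u v"
  "dotp u (v + w) = dotp u v + dotp u w"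
  "dotp u (v - w) = dotp u v - dotp u w"
  "dotp u 0 = 0"
  by (simp_all add: dotp_expand algebra_simps)

lemma dotp_axis [simp]: "dotp (axis k a) v = a * v $ k" "dotp v (axis k a) = v $ k * a"
  by (simp_all add: dotp_def axis_def if_distrib if_distribR cong: if_cong)

lemma dotp_crossp [simp]:
  "dotp v (crossp v w) = 0" "dotp w (crossp v w) = 0"
  "dotp (crossp v w) v = 0" "dotp (crossp v w) w = 0"
  by (simp_all add: dotp_expand algebra_simps)

lemma crossp_zero_right [simp]: "crossp v 0 = 0"
  by (simp add: vec3_eq_iff)

lemma crossp_crossp: "crossp u (crossp v w) = dotp u w *s v - dotp u v *s w"
  by (simp add: vec3_eq_iff dotp_expand algebra_simps)

lemma cramer3:
  "dotp v3 (crossp v1 v2) *s w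
     = dotp w (crossp v2 v3) *s v1 + dotp w (crossp v3 v1) *s v2 + dotp w (crossp v1 v2) *s v3"
  by (simp add: vec3_eq_iff dotp_expand algebra_simps)

lemma crossp_eq_0_imp_parallel:
  fixes v w :: "'a::field ^ 3"
  assumes "crossp v w = 0" "w \<noteq> 0"
  obtains c where "v = c *s w"
proof -
  obtain k where k: "w $ k \<noteq> 0"
    using assms(2) by (auto simp: vec_eq_iff)
  have "0 = crossp (axis k 1) (crossp v w)"
    using assms(1) by simp
  also have "\<dots> = w $ k *s v - v $ k *s w"
    by (simp add: crossp_crossp)
  finally have "v = (v $ k / w $ k) *s w"
    using k by (simp add: vec_eq_iff field_simps)
  then show thesis
    by (rule that)
qed

section \<open>Points and lines of PG(2,q)\<close>

lemma mem_proj_point_iff: "w \<in> proj_point v \<longleftrightarrow> (\<exists>c. c \<noteq> 0 \<and> w = c *s v)"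
  by (auto simp: proj_point_def)

lemma proj_point_self: "v \<in> proj_point v"
  unfolding mem_proj_point_iff by (auto intro: exI[of _ 1])

lemma proj_point_smult:
  fixes v :: "'a::field ^ 3"
  assumes "c \<noteq> 0"
  shows "proj_point (c *s v) = proj_point v"
  unfolding proj_point_def
proof (intro set_eqI iffI; elim CollectE exE conjE)
  fix x d assume "x = d *s (c *s v)" "d \<noteq> 0"
  then show "x \<in> {e *s v |e. e \<noteq> 0}"
    using assms by (auto intro!: exI[of _ "d * c"])
next
  fix x d assume "x = d *s v" "d \<noteq> 0"
  then show "x \<in> {e *s (c *s v) |e. e \<noteq> 0}"
    using assms by (auto intro!: exI[of _ "d / c"])
qed

lemma proj_point_eq_iff:
  fixes v w :: "'a::field ^ 3"
  shows "proj_point w = proj_point v \<longleftrightarrow> w \<in> proj_point v"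
proof
  assume "proj_point w = proj_point v"
  then show "w \<in> proj_point v"
    using proj_point_self[of w] by simp
next
  assume "w \<in> proj_point v"
  then obtain c where "c \<noteq> 0" "w = c *s v"
    by (auto simp: mem_proj_point_iff)
  then show "proj_point w = proj_point v"
    by (simp add: proj_point_smult)
qed

lemma proj_point_in_PG2: "v \<noteq> 0 \<Longrightarrow> proj_point v \<in> PG2"
  by (auto simp: PG2_def)

lemma PG2E:
  assumes "P \<in> PG2"
  obtains v where "v \<noteq> 0" "P = proj_point v"
  using assms by (auto simp: PG2_def)

lemma PG2_memD:
  assumes "P \<in> PG2" "x \<in> P"
  shows "x \<noteq> 0" "P = proj_point x"
proof -
  obtain v where v: "v \<noteq> 0" "P = proj_point v"
    using assms(1) by (rule PG2E)
  then obtain c where "c \<noteq> 0" "x = c *s v"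
    using assms(2) by (auto simp: mem_proj_point_iff)
  with v show "x \<noteq> 0" "P = proj_point x"
    by (auto simp: proj_point_smult)
qed

lemma proj_point_eq_iff_crossp:
  fixes v w :: "'a::field ^ 3"
  assumes "v \<noteq> 0" "w \<noteq> 0"
  shows "proj_point v = proj_point w \<longleftrightarrow> crossp v w = 0"
proof
  assume "proj_point v = proj_point w"
  then obtain c where "v = c *s w"
    by (auto simp: proj_point_eq_iff mem_proj_point_iff)
  then show "crossp v w = 0"
    by (simp add: vec3_eq_iff algebra_simps)
next
  assume "crossp v w = 0"
  then obtain c where "v = c *s w"
    using assms(2) by (rule crossp_eq_0_imp_parallel)
  with assms(1) show "proj_point v = proj_point w"
    by (auto simp: proj_point_smult)
qed

lemma proj_point_eq_if_lin_dep:
  fixes v w :: "'a::field ^ 3"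
  assumes "a *s v + b *s w = 0" "a \<noteq> 0" "b \<noteq> 0"
  shows "proj_point v = proj_point w"
proof -
  have "v = (- b / a) *s w"
    using assms by (simp add: vec_eq_iff field_simps add_eq_0_iff2)
  moreover have "- b / a \<noteq> 0"
    using assms(2,3) by simp
  ultimately show ?thesis
    using proj_point_smult by metis
qed

lemma card_proj_point:
  fixes v :: "'a::{field,finite} ^ 3"
  assumes "v \<noteq> 0"
  shows "card (proj_point v) = CARD('a) - 1"
proof -
  have "proj_point v = (\<lambda>c. c *s v) ` (UNIV - {0})"
    by (auto simp: proj_point_def)
  moreover have "inj_on (\<lambda>c. c *s v) (UNIV - {0})"
    using assms by (auto intro!: inj_onI simp: vec_eq_iff)
  ultimately show ?thesis
    by (simp add: card_image card_Diff_singleton)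
qed

lemma card_field_ge_2: "2 \<le> CARD('a::{field,finite})"
proof -
  have "card {0::'a, 1} \<le> CARD('a)"
    by (rule card_mono) simp_all
  then show ?thesis
    by simp
qed

lemma card_eq_card_times_fibre:
  assumes "finite A" "finite Y" "f ` A \<subseteq> Y" "\<And>y. y \<in> Y \<Longrightarrow> card {x\<in>A. f x = y} = k"
  shows "card A = card Y * k"
proof -
  have "A = (\<Union>y\<in>Y. {x\<in>A. f x = y})"
    using assms(3) by auto
  then have "card A = card (\<Union>y\<in>Y. {x\<in>A. f x = y})"
    by simp
  also have "\<dots> = (\<Sum>y\<in>Y. card {x\<in>A. f x = y})"
    by (rule card_UN_disjoint) (use assms(1,2) in auto)
  also have "\<dots> = card Y * k"
    using assms(4) by simp
  finally show ?thesis .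
qed

lemma line_of_eq: "line_of u = {P \<in> PG2. \<exists>v\<in>P. dotp u v = 0}"
  by (simp add: line_of_def dotp_def)

lemma proj_point_in_line_of_iff:
  fixes u v :: "'a::{field,finite} ^ 3"
  assumes "v \<noteq> 0"
  shows "proj_point v \<in> line_of u \<longleftrightarrow> dotp u v = 0"
proof
  assume "proj_point v \<in> line_of u"
  then obtain x where "x \<in> proj_point v" "dotp u x = 0"
    by (auto simp: line_of_eq)
  then show "dotp u v = 0"
    by (auto simp: mem_proj_point_iff)
next
  assume "dotp u v = 0"
  then show "proj_point v \<in> line_of u"
    using assms proj_point_self[of v] by (auto simp: line_of_eq proj_point_in_PG2)
qed

lemma line_of_smult: "c \<noteq> 0 \<Longrightarrow> line_of (c *s u) = line_of u"
  by (simp add: line_of_eq)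

lemma line_subset_PG2: "l \<in> PG2_lines \<Longrightarrow> l \<subseteq> PG2"
  by (auto simp: PG2_lines_def line_of_def)

lemma card_kernel_dotp:
  fixes u :: "'a::{field,finite} ^ 3"
  assumes "u \<noteq> 0"
  shows "card {x. dotp u x = 0} = CARD('a) ^ 2"
proof -
  obtain k where k: "u $ k \<noteq> 0"
    using assms by (auto simp: vec_eq_iff)
  have "CARD('a ^ 3) = CARD('a) * card {x. dotp u x = 0}"
  proof (rule card_eq_card_times_fibre[where f = "dotp u"])
    fix c :: 'a
    let ?t = "axis k (c / u $ k)"
    have "bij_betw (\<lambda>x. x + ?t) {x. dotp u x = 0} {x \<in> UNIV. dotp u x = c}"
      by (rule bij_betwI[where g = "\<lambda>x. x - ?t"]) (use k in auto)
    then show "card {x \<in> UNIV. dotp u x = c} = card {x. dotp u x = 0}"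
      by (simp add: bij_betw_same_card)
  qed auto
  then show ?thesis
    by (simp add: power_numeral_reduce)
qed

lemma Union_line_of: "\<Union>(line_of u) = {x. dotp u x = 0} - {0}"
proof (intro set_eqI iffI)
  fix x assume "x \<in> \<Union>(line_of u)"
  then obtain P where P: "P \<in> line_of u" "x \<in> P"
    by blast
  then have "P \<in> PG2"
    by (simp add: line_of_eq)
  with P(2) have "x \<noteq> 0" "P = proj_point x"
    by (simp_all add: PG2_memD)
  with P(1) show "x \<in> {x. dotp u x = 0} - {0}"
    by (simp add: proj_point_in_line_of_iff)
next
  fix x assume "x \<in> {x. dotp u x = 0} - {0}"
  then have "proj_point x \<in> line_of u"
    by (simp add: proj_point_in_line_of_iff)
  then show "x \<in> \<Union>(line_of u)"
    using proj_point_self[of x] by blast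
qed

lemma card_line:
  fixes l :: "('a::{field,finite} ^ 3) set set"
  assumes "l \<in> PG2_lines"
  shows "card l = CARD('a) + 1"
proof -
  let ?q = "CARD('a)"
  obtain u :: "'a ^ 3" where u: "u \<noteq> 0" "l = line_of u"
    using assms by (auto simp: PG2_lines_def)
  have "(?q - 1) * card l = card (\<Union>l)"
  proof (rule card_partition)
    show "card P = ?q - 1" if "P \<in> l" for P
      using that line_subset_PG2[OF assms] by (auto elim!: PG2E simp: card_proj_point)
    show "P \<inter> P' = {}" if "P \<in> l" "P' \<in> l" "P \<noteq> P'" for P P'
    proof (rule ccontr)
      assume "P \<inter> P' \<noteq> {}"
      then obtain x where "x \<in> P" "x \<in> P'"
        by blast
      moreover have "P \<in> PG2" "P' \<in> PG2"
        using that line_subset_PG2[OF assms] by blast+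
      ultimately have "P = proj_point x" "P' = proj_point x"
        by (simp_all add: PG2_memD)
      with that(3) show False
        by simp
    qed
  qed simp_all
  also have "\<dots> = ?q ^ 2 - 1"
    using card_kernel_dotp[OF u(1)] u(2) by (simp add: Union_line_of card_Diff_singleton)
  also have "\<dots> = (?q - 1) * (?q + 1)"
    by (simp add: power2_eq_square algebra_simps)
  finally have "(?q - 1) * card l = (?q - 1) * (?q + 1)" .
  moreover have "?q - 1 \<noteq> 0"
    using card_field_ge_2[where 'a = 'a] by simp
  ultimately show ?thesis
    by (metis mult_left_cancel)
qed

lemma line_of_crossp:
  fixes v w :: "'a::{field,finite} ^ 3"
  assumes "v \<noteq> 0" "w \<noteq> 0" "proj_point v \<noteq> proj_point w"
  shows "line_of (crossp v w) \<in> PG2_lines" "proj_point v \<in> line_of (crossp v w)"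
    "proj_point w \<in> line_of (crossp v w)"
  using assms by (auto simp: PG2_lines_def proj_point_eq_iff_crossp proj_point_in_line_of_iff dotp_commute)

lemma line_eq_line_of_crossp:
  fixes v w :: "'a::{field,finite} ^ 3"
  assumes "l \<in> PG2_lines" "v \<noteq> 0" "w \<noteq> 0" "proj_point v \<noteq> proj_point w"
    "proj_point v \<in> l" "proj_point w \<in> l"
  shows "l = line_of (crossp v w)"
proof -
  obtain u where u: "u \<noteq> 0" "l = line_of u"
    using assms(1) by (auto simp: PG2_lines_def)
  have "dotp u v = 0" "dotp u w = 0"
    using assms u proj_point_in_line_of_iff by blast+
  then have "crossp u (crossp v w) = 0"
    by (simp add: crossp_crossp)
  moreover have "crossp v w \<noteq> 0"
    using assms(2-4) proj_point_eq_iff_crossp by blast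
  ultimately obtain c where c: "u = c *s crossp v w"
    by (rule crossp_eq_0_imp_parallel)
  with u(1) have "c \<noteq> 0"
    by auto
  with u(2) c show ?thesis
    by (simp add: line_of_smult)
qed

lemma line_unique:
  fixes l l' :: "('a::{field,finite} ^ 3) set set"
  assumes "l \<in> PG2_lines" "l' \<in> PG2_lines" "P \<in> l" "Q \<in> l" "P \<in> l'" "Q \<in> l'" "P \<noteq> Q"
  shows "l = l'"
proof -
  have "P \<in> PG2" "Q \<in> PG2"
    using assms(1,3,4) line_subset_PG2 by blast+
  then obtain v w :: "'a ^ 3" where "v \<noteq> 0" "P = proj_point v" "w \<noteq> 0" "Q = proj_point w"
    by (metis PG2E)
  then have "l = line_of (crossp v w)" "l' = line_of (crossp v w)"
    using line_eq_line_of_crossp assms by blast+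
  then show ?thesis
    by simp
qed

definition join :: "('a::{field,finite} ^ 3) set \<Rightarrow> ('a ^ 3) set \<Rightarrow> ('a ^ 3) set set" where
  "join P Q = (THE l. l \<in> PG2_lines \<and> P \<in> l \<and> Q \<in> l)"

lemma join:
  assumes "P \<in> PG2" "Q \<in> PG2" "P \<noteq> Q"
  shows "join P Q \<in> PG2_lines" "P \<in> join P Q" "Q \<in> join P Q"
proof -
  obtain v w where "v \<noteq> 0" "P = proj_point v" "w \<noteq> 0" "Q = proj_point w"
    using assms(1,2) by (metis PG2E)
  then have "\<exists>l. l \<in> PG2_lines \<and> P \<in> l \<and> Q \<in> l"
    using line_of_crossp assms(3) by metis
  then have "\<exists>!l. l \<in> PG2_lines \<and> P \<in> l \<and> Q \<in> l"
    using line_unique assms(3) by blast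
  then show "join P Q \<in> PG2_lines" "P \<in> join P Q" "Q \<in> join P Q"
    unfolding join_def by (metis (mono_tags, lifting) theI')+
qed

lemma join_unique:
  assumes "l \<in> PG2_lines" "P \<in> l" "Q \<in> l" "P \<noteq> Q"
  shows "l = join P Q"
proof -
  have "P \<in> PG2" "Q \<in> PG2"
    using assms line_subset_PG2 by blast+
  then show ?thesis
    using line_unique[OF assms(1) join(1) assms(2,3) join(2,3)] assms(4) by blast
qed

lemma inj_on_join:
  assumes "P \<in> PG2" "m \<in> PG2_lines" "P \<notin> m"
  shows "inj_on (join P) m"
proof (rule inj_onI, rule ccontr)
  fix R R' assume R: "R \<in> m" "R' \<in> m" "join P R = join P R'" "R \<noteq> R'"
  have "R \<in> PG2" "R' \<in> PG2" "P \<noteq> R" "P \<noteq> R'"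
    using R(1,2) assms line_subset_PG2 by (blast, blast, metis, metis)
  then have "join P R \<in> PG2_lines" "P \<in> join P R" "R \<in> join P R" "R' \<in> join P R'"
    using join[OF assms(1)] by simp_all
  moreover from this have "R' \<in> join P R"
    using R(3) by simp
  ultimately have "m = join P R"
    using line_unique[OF assms(2) _ R(1,2) _ _ R(4)] by blast
  with assms(3) \<open>P \<in> join P R\<close> show False
    by simp
qed

lemma lines_intersect:
  fixes l l' :: "('a::{field,finite} ^ 3) set set"
  assumes "l \<in> PG2_lines" "l' \<in> PG2_lines"
  shows "l \<inter> l' \<noteq> {}"
proof -
  obtain u u' :: "'a ^ 3" where u: "u \<noteq> 0" "l = line_of u" "u' \<noteq> 0" "l' = line_of u'"
    using assms by (auto simp: PG2_lines_def)
  show ?thesis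
  proof (cases "crossp u u' = 0")
    case True
    then obtain c where "u = c *s u'"
      using u(3) by (rule crossp_eq_0_imp_parallel)
    with u have "l = l'"
      by (auto simp: line_of_smult)
    moreover have "l' \<noteq> {}"
      using card_line[OF assms(2)] by auto
    ultimately show ?thesis
      by simp
  next
    case False
    then have "proj_point (crossp u u') \<in> l \<inter> l'"
      using u by (simp add: proj_point_in_line_of_iff dotp_commute)
    then show ?thesis
      by blast
  qed
qed

lemma line_point_lincomb:
  fixes v w x :: "'a::{field,finite} ^ 3"
  assumes "l \<in> PG2_lines" "v \<noteq> 0" "w \<noteq> 0" "proj_point v \<noteq> proj_point w"
    "proj_point v \<in> l" "proj_point w \<in> l" "x \<noteq> 0" "proj_point x \<in> l"
  obtains a b where "x = a *s v + b *s w"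
proof -
  let ?n = "crossp v w"
  have "?n \<noteq> 0"
    using assms(2-4) proj_point_eq_iff_crossp by blast
  then obtain k where k: "?n $ k \<noteq> 0"
    by (auto simp: vec_eq_iff)
  have "dotp x ?n = 0"
    using line_eq_line_of_crossp[OF assms(1-6)] assms(7,8)
    by (simp add: proj_point_in_line_of_iff dotp_commute)
  then have "?n $ k *s x = dotp x (crossp w (axis k 1)) *s v + dotp x (crossp (axis k 1) v) *s w"
    using cramer3[of "axis k 1" v w x] by (simp add: dotp_commute)
  then have "x = (dotp x (crossp w (axis k 1)) / ?n $ k) *s v + (dotp x (crossp (axis k 1) v) / ?n $ k) *s w"
    using k by (simp add: vec3_eq_iff field_simps)
  then show thesis
    by (rule that)
qed

lemma noncollinear_imp_dotp_crossp_neq_0: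
  fixes v1 v2 v3 :: "'a::{field,finite} ^ 3"
  assumes "v1 \<noteq> 0" "v2 \<noteq> 0" "v3 \<noteq> 0" "proj_point v1 \<noteq> proj_point v2"
    and "\<not> collinear3 (proj_point v1) (proj_point v2) (proj_point v3)"
  shows "dotp v3 (crossp v1 v2) \<noteq> 0"
proof
  assume "dotp v3 (crossp v1 v2) = 0"
  then have "proj_point v3 \<in> line_of (crossp v1 v2)"
    using assms(3) by (simp add: proj_point_in_line_of_iff dotp_commute)
  then have "collinear3 (proj_point v1) (proj_point v2) (proj_point v3)"
    using line_of_crossp[OF assms(1,2,4)] unfolding collinear3_def by blast
  with assms(5) show False
    by contradiction
qed

lemma noncollinear_lincomb:
  fixes v1 v2 v3 :: "'a::{field,finite} ^ 3"
  assumes "v1 \<noteq> 0" "v2 \<noteq> 0" "v3 \<noteq> 0" "proj_point v1 \<noteq> proj_point v2"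
    and "\<not> collinear3 (proj_point v1) (proj_point v2) (proj_point v3)"
  obtains a b c where "w = a *s v1 + b *s v2 + c *s v3"
proof -
  let ?D = "dotp v3 (crossp v1 v2)"
  let ?a = "dotp w (crossp v2 v3)" and ?b = "dotp w (crossp v3 v1)" and ?c = "dotp w (crossp v1 v2)"
  have "?D \<noteq> 0"
    using assms by (rule noncollinear_imp_dotp_crossp_neq_0)
  then have "w = inverse ?D *s (?D *s w)"
    by simp
  also have "?D *s w = ?a *s v1 + ?b *s v2 + ?c *s v3"
    by (rule cramer3)
  also have "inverse ?D *s (?a *s v1 + ?b *s v2 + ?c *s v3)
      = (inverse ?D * ?a) *s v1 + (inverse ?D * ?b) *s v2 + (inverse ?D * ?c) *s v3"
    by (simp only: vector_add_ldistrib vector_smult_assoc)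
  finally show thesis
    by (rule that)
qed

lemma sum_if_eq_smult:
  fixes A :: "('a::field ^ 'n) set"
  assumes "finite A" "x \<in> A"
  shows "(\<Sum>v\<in>A. (if v = x then d else 0) *s v) = d *s x"
proof -
  have "(\<Sum>v\<in>A. (if v = x then d else 0) *s v) = (\<Sum>v\<in>A. if v = x then d *s x else 0)"
    by (rule sum.cong) auto
  with assms show ?thesis
    by simp
qed

lemma spans_PG2_if_noncollinear:
  fixes S :: "('a::{field,finite} ^ 3) set set"
  assumes "P1 \<in> S \<inter> PG2" "P2 \<in> S \<inter> PG2" "P3 \<in> S \<inter> PG2" "P1 \<noteq> P2"
    and "\<not> collinear3 P1 P2 P3"
  shows "spans_PG2 S"
  unfolding spans_PG2_def
proof
  fix w :: "'a ^ 3"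
  obtain v1 where v1: "v1 \<noteq> 0" "P1 = proj_point v1"
    using assms(1) by (blast elim: PG2E)
  obtain v2 where v2: "v2 \<noteq> 0" "P2 = proj_point v2"
    using assms(2) by (blast elim: PG2E)
  obtain v3 where v3: "v3 \<noteq> 0" "P3 = proj_point v3"
    using assms(3) by (blast elim: PG2E)
  have reps: "v1 \<in> reps S" "v2 \<in> reps S" "v3 \<in> reps S"
    using assms(1-3) v1 v2 v3 by (simp_all add: reps_def)
  have "proj_point v1 \<noteq> proj_point v2" "\<not> collinear3 (proj_point v1) (proj_point v2) (proj_point v3)"
    using assms(4,5) v1 v2 v3 by simp_all
  then obtain a b c where w: "w = a *s v1 + b *s v2 + c *s v3"
    by (rule noncollinear_lincomb[OF v1(1) v2(1) v3(1)])
  let ?f = "\<lambda>v. (if v = v1 then a else 0) + (if v = v2 then b else 0) + (if v = v3 then c else 0)"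
  have "(\<Sum>v\<in>reps S. ?f v *s v)
      = (\<Sum>v\<in>reps S. (if v = v1 then a else 0) *s v) + (\<Sum>v\<in>reps S. (if v = v2 then b else 0) *s v)
        + (\<Sum>v\<in>reps S. (if v = v3 then c else 0) *s v)"
    by (simp only: vector_sadd_rdistrib sum.distrib)
  also have "\<dots> = w"
    using reps w by (simp only: sum_if_eq_smult[OF finite])
  finally have "w = (\<Sum>v\<in>reps S. ?f v *s v)"
    by (rule sym)
  then show "\<exists>f. w = (\<Sum>v\<in>reps S. f v *s v)"
    by (rule exI[where x = ?f])
qed

locale subplane =
  fixes B :: "('a::{field,finite} ^ 3) set set" and r :: nat
  assumes subplane_of_order: "subplane_of_order B r"
begin

definition secant :: "('a ^ 3) set set \<Rightarrow> bool" where
  "secant l \<longleftrightarrow> l \<in> PG2_lines \<and> 2 \<le> card (l \<inter> B)"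

lemma subset_PG2: "B \<subseteq> PG2"
  using subplane_of_order unfolding subplane_of_order_def by (elim conjE) assumption

lemma card_secant_line: "\<forall>l\<in>PG2_lines. card (l \<inter> B) \<ge> 2 \<longrightarrow> card (l \<inter> B) = r + 1"
  using subplane_of_order unfolding subplane_of_order_def by (elim conjE) assumption

lemma secant_lines_meet:
  "\<forall>l1\<in>PG2_lines. \<forall>l2\<in>PG2_lines.
     card (l1 \<inter> B) \<ge> 2 \<and> card (l2 \<inter> B) \<ge> 2 \<and> l1 \<inter> B \<noteq> l2 \<inter> B
     \<longrightarrow> l1 \<inter> l2 \<inter> B \<noteq> {}"
  using subplane_of_order unfolding subplane_of_order_def by (elim conjE) assumption

lemma four_points:
  "\<exists>P1 P2 P3 P4. {P1, P2, P3, P4} \<subseteq> B \<and> card {P1, P2, P3, P4} = 4 \<and>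
     \<not> collinear3 P1 P2 P3 \<and> \<not> collinear3 P1 P2 P4 \<and>
     \<not> collinear3 P1 P3 P4 \<and> \<not> collinear3 P2 P3 P4"
  using subplane_of_order unfolding subplane_of_order_def by (elim conjE) assumption

lemma card_secant: "secant l \<Longrightarrow> card (l \<inter> B) = r + 1"
  using card_secant_line by (simp add: secant_def)

lemma secant_iff: "secant l \<longleftrightarrow> l \<in> PG2_lines \<and> (\<exists>P\<in>l \<inter> B. \<exists>Q\<in>l \<inter> B. P \<noteq> Q)"
proof -
  have "2 \<le> card (l \<inter> B) \<longleftrightarrow> \<not> card (l \<inter> B) \<le> Suc 0"
    by arith
  then show ?thesis
    by (simp add: secant_def card_le_Suc0_iff_eq)
qed

lemma secants_intersect:
  assumes "secant l" "secant l'" "l \<noteq> l'"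
  obtains P where "P \<in> B" "P \<in> l" "P \<in> l'"
proof -
  have "l \<inter> B \<noteq> l' \<inter> B"
  proof
    assume same: "l \<inter> B = l' \<inter> B"
    obtain P Q where "P \<in> l \<inter> B" "Q \<in> l \<inter> B" "P \<noteq> Q"
      using assms(1) unfolding secant_iff by blast
    moreover from this have "P \<in> l'" "Q \<in> l'"
      unfolding same by blast+
    ultimately have "l = l'"
      using assms(1,2) line_unique[of l l' P Q] by (simp add: secant_def)
    with assms(3) show False
      by contradiction
  qed
  then have "l \<inter> l' \<inter> B \<noteq> {}"
    using secant_lines_meet assms(1,2) by (simp add: secant_def)
  then show thesis
    using that by blast
qed

lemma secant_through_outside_unique:
  assumes "Q \<notin> B" "secant l" "secant l'" "Q \<in> l" "Q \<in> l'"
  shows "l = l'"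
proof (rule ccontr)
  assume "l \<noteq> l'"
  with assms(2,3) obtain P where "P \<in> B" "P \<in> l" "P \<in> l'"
    by (rule secants_intersect)
  moreover from this have "P \<noteq> Q"
    using assms(1) by metis
  ultimately have "l = l'"
    using assms line_unique[of l l' P Q] by (simp add: secant_def)
  with \<open>l \<noteq> l'\<close> show False
    by contradiction
qed

lemma triangle:
  obtains P1 P2 P3 where "P1 \<in> B" "P2 \<in> B" "P3 \<in> B" "P1 \<noteq> P2" "P2 \<noteq> P3" "P1 \<noteq> P3"
    "\<not> collinear3 P1 P2 P3"
proof -
  obtain P1 P2 P3 P4 where P: "{P1, P2, P3, P4} \<subseteq> B" "card {P1, P2, P3, P4} = 4"
      "\<not> collinear3 P1 P2 P3"
    using four_points by (elim exE conjE) (rule that)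
  have "distinct [P1, P2, P3, P4]"
    using P(2) by (intro card_distinct) simp
  then have "P1 \<noteq> P2" "P2 \<noteq> P3" "P1 \<noteq> P3"
    by simp_all
  moreover have "P1 \<in> B" "P2 \<in> B" "P3 \<in> B"
    using P(1) by simp_all
  ultimately show thesis
    using P(3) by (intro that)
qed

lemma two_points:
  obtains P Q where "P \<in> B" "Q \<in> B" "P \<noteq> Q"
  using triangle by metis

lemma secant_through_two_points:
  assumes "P \<in> B" "R \<in> B" "P \<noteq> R"
  shows "secant (join P R)" "P \<in> join P R" "R \<in> join P R"
proof -
  have "P \<in> PG2" "R \<in> PG2"
    using assms(1,2) subset_PG2 by blast+
  note J = join[OF this assms(3)]
  show "secant (join P R)"
    unfolding secant_iff using J assms by blast
  show "P \<in> join P R" "R \<in> join P R"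
    using J by simp_all
qed

lemma card_secants_through:
  assumes "P \<in> B" "secant m" "P \<notin> m"
  shows "card {l. secant l \<and> P \<in> l} = r + 1"
proof -
  have m: "m \<in> PG2_lines"
    using assms(2) by (simp add: secant_def)
  have "bij_betw (join P) (m \<inter> B) {l. secant l \<and> P \<in> l}"
  proof (rule bij_betw_imageI)
    show "inj_on (join P) (m \<inter> B)"
      using inj_on_join[OF _ m assms(3)] assms(1) subset_PG2 by (blast intro: inj_on_subset)
    show "join P ` (m \<inter> B) = {l. secant l \<and> P \<in> l}"
    proof (intro set_eqI iffI)
      fix l assume "l \<in> join P ` (m \<inter> B)"
      then obtain R where "R \<in> m \<inter> B" "l = join P R"
        by blast
      moreover from this have "P \<noteq> R"
        using assms(3) by (metis IntD1)
      ultimately show "l \<in> {l. secant l \<and> P \<in> l}"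
        using secant_through_two_points assms(1) by simp
    next
      fix l assume l: "l \<in> {l. secant l \<and> P \<in> l}"
      then have "l \<noteq> m"
        using assms(3) by blast
      with l assms(2) obtain R where R: "R \<in> B" "R \<in> l" "R \<in> m"
        by (blast elim: secants_intersect)
      then have "P \<noteq> R"
        using assms(3) by metis
      then have "l = join P R"
        using l R(2) by (intro join_unique) (simp_all add: secant_def)
      with R show "l \<in> join P ` (m \<inter> B)"
        by blast
    qed
  qed
  then show ?thesis
    using card_secant[OF assms(2)] by (simp add: bij_betw_same_card)
qed

lemma card_remove_eq_secants_through:
  assumes "P \<in> B"
  shows "card (B - {P}) = card {l. secant l \<and> P \<in> l} * r"
proof -
  let ?L = "{l. secant l \<and> P \<in> l}"
  have "B - {P} = (\<Union>l\<in>?L. l \<inter> B - {P})"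
  proof (intro set_eqI iffI)
    fix S assume S: "S \<in> B - {P}"
    then have "P \<noteq> S"
      by blast
    then have "join P S \<in> ?L" "S \<in> join P S"
      using secant_through_two_points[of P S] assms S by simp_all
    with S show "S \<in> (\<Union>l\<in>?L. l \<inter> B - {P})"
      by blast
  qed blast
  also have "card \<dots> = (\<Sum>l\<in>?L. card (l \<inter> B - {P}))"
  proof (rule card_UN_disjoint)
    show "\<forall>l\<in>?L. \<forall>l'\<in>?L. l \<noteq> l' \<longrightarrow> (l \<inter> B - {P}) \<inter> (l' \<inter> B - {P}) = {}"
    proof (intro ballI impI equals0I)
      fix l l' S assume "l \<in> ?L" "l' \<in> ?L" "l \<noteq> l'" "S \<in> (l \<inter> B - {P}) \<inter> (l' \<inter> B - {P})"
      then show False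
        using line_unique[of l l' S P] by (simp add: secant_def)
    qed
  qed simp_all
  also have "\<dots> = (\<Sum>l\<in>?L. r)"
    using card_secant assms by (intro sum.cong) (simp_all add: card_Diff_singleton)
  finally show ?thesis
    by simp
qed

lemma card_subplane: "card B = r\<^sup>2 + r + 1"
proof -
  obtain P Q R where PQR: "P \<in> B" "Q \<in> B" "R \<in> B" "P \<noteq> Q" "Q \<noteq> R" "P \<noteq> R"
      "\<not> collinear3 P Q R"
    by (rule triangle)
  note QR = secant_through_two_points[OF PQR(2,3,5)]
  have "P \<notin> join Q R"
  proof
    assume "P \<in> join Q R"
    with QR have "collinear3 P Q R"
      unfolding collinear3_def secant_def by blast
    with PQR(7) show False
      by contradiction
  qed
  then have "card (B - {P}) = (r + 1) * r"
    using card_remove_eq_secants_through[OF PQR(1)] card_secants_through[OF PQR(1) QR(1)] by simp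
  moreover have "card B = Suc (card (B - {P}))"
    by (rule card.remove[OF _ PQR(1)]) simp
  ultimately show ?thesis
    by (simp add: power2_eq_square)
qed

lemma order_ge_2: "2 \<le> r"
proof (rule ccontr)
  assume "\<not> 2 \<le> r"
  then have "r\<^sup>2 + r + 1 \<le> 3"
    using power_mono[of r 1 2] by simp
  moreover obtain P1 P2 P3 P4 where "{P1, P2, P3, P4} \<subseteq> B" "card {P1, P2, P3, P4} = 4"
    using four_points by (elim exE conjE) (rule that)
  then have "4 \<le> card B"
    by (metis card_mono finite)
  ultimately show False
    using card_subplane by simp
qed

lemma secant_third_point:
  assumes "secant l" "P \<in> l \<inter> B" "Q \<in> l \<inter> B"
  obtains T where "T \<in> l \<inter> B" "T \<noteq> P" "T \<noteq> Q"
proof -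
  have "card (l \<inter> B) - card {P, Q} \<le> card (l \<inter> B - {P, Q})"
    by (rule diff_card_le_card_Diff) simp
  moreover have "card {P, Q} \<le> 2"
    by (simp add: card_insert_if)
  ultimately have "l \<inter> B - {P, Q} \<noteq> {}"
    using card_secant[OF assms(1)] order_ge_2 by (intro notI) simp
  then show thesis
    using that by blast
qed

text \<open>Projecting B from Q onto a secant m not through Q is injective when no secant
  passes through Q.\<close>

lemma card_le_if_no_secant_through:
  assumes "Q \<in> PG2" "Q \<notin> B" "\<And>l. secant l \<Longrightarrow> Q \<notin> l"
  shows "card B \<le> CARD('a) + 1"
proof -
  obtain P P' where "P \<in> B" "P' \<in> B" "P \<noteq> P'"
    by (rule two_points)
  then have "secant (join P P')"
    by (rule secant_through_two_points)
  then have m: "join P P' \<in> PG2_lines" "Q \<notin> join P P'"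
    using assms(3) by (simp_all add: secant_def)
  have QR: "join Q R \<in> PG2_lines" "Q \<in> join Q R" "R \<in> join Q R" if "R \<in> B" for R
  proof -
    have "R \<in> PG2" "Q \<noteq> R"
      using that assms(2) subset_PG2 by (blast, metis)
    then show "join Q R \<in> PG2_lines" "Q \<in> join Q R" "R \<in> join Q R"
      using join[OF assms(1)] by simp_all
  qed
  have "\<forall>R\<in>B. \<exists>S. S \<in> join Q R \<inter> join P P'"
    using lines_intersect[OF QR(1) m(1)] by blast
  from bchoice[OF this] obtain proj where proj: "\<forall>R\<in>B. proj R \<in> join Q R \<inter> join P P'"
    by blast
  have "inj_on proj B"
  proof (rule inj_onI, rule ccontr)
    fix R R' assume R: "R \<in> B" "R' \<in> B" "proj R = proj R'" "R \<noteq> R'"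
    have "proj R \<in> join Q R" "proj R \<in> join Q R'" "proj R \<in> join P P'"
      using proj R(1-3) by (blast, metis IntD1, blast)
    moreover from this have "Q \<noteq> proj R"
      using m(2) by metis
    ultimately have "join Q R = join Q R'"
      using line_unique[OF QR(1)[OF R(1)] QR(1)[OF R(2)] QR(2)[OF R(1)] _ QR(2)[OF R(2)]] by simp
    then have "R \<in> join Q R \<inter> B" "R' \<in> join Q R \<inter> B"
      using QR(3)[OF R(1)] QR(3)[OF R(2)] R(1,2) by simp_all
    then have "secant (join Q R)"
      unfolding secant_iff using QR(1)[OF R(1)] R(4) by blast
    then show False
      using assms(3) QR(2)[OF R(1)] by blast
  qed
  moreover have "proj ` B \<subseteq> join P P'"
    using proj by blast
  ultimately have "card B \<le> card (join P P')"
    by (simp add: card_inj_on_le)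
  then show ?thesis
    using card_line[OF m(1)] by simp
qed

lemma spans: "spans_PG2 B"
proof -
  obtain P Q R where "P \<in> B" "Q \<in> B" "R \<in> B" "P \<noteq> Q" "Q \<noteq> R" "P \<noteq> R" "\<not> collinear3 P Q R"
    by (rule triangle)
  moreover from this have "P \<in> B \<inter> PG2" "Q \<in> B \<inter> PG2" "R \<in> B \<inter> PG2"
    using subset_PG2 by blast+
  ultimately show ?thesis
    by (intro spans_PG2_if_noncollinear[of P B Q R])
qed

end

locale baer = subplane +
  assumes card_field: "CARD('a) = r\<^sup>2"
begin

lemma point_outside:
  obtains Q where "Q \<in> PG2" "Q \<notin> B"
proof -
  obtain P P' where "P \<in> B" "P' \<in> B" "P \<noteq> P'"
    by (rule two_points)
  then have m: "secant (join P P')"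
    by (rule secant_through_two_points)
  have "r * 1 < r * r"
    using order_ge_2 by (intro mult_strict_left_mono) simp_all
  then have "card (join P P' \<inter> B) < card (join P P')"
    using card_secant[OF m] card_line[of "join P P'"] m card_field by (simp add: secant_def power2_eq_square)
  then obtain Q where "Q \<in> join P P'" "Q \<notin> B"
    by (metis Int_absorb2 nat_less_le subsetI)
  moreover from this have "Q \<in> PG2"
    using m line_subset_PG2 by (auto simp: secant_def)
  ultimately show thesis
    by (intro that)
qed

lemma ex_secant_through:
  assumes "Q \<in> PG2" "Q \<notin> B"
  obtains l where "secant l" "Q \<in> l"
proof (rule ccontr)
  assume "\<not> thesis"
  then have "card B \<le> CARD('a) + 1"
    using that by (intro card_le_if_no_secant_through[OF assms]) blast
  then show False
    using card_subplane card_field order_ge_2 by simp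
qed

lemma secant_mult_outside:
  assumes "Q \<in> PG2" "Q \<notin> B"
  shows "secant_mult B Q = (r\<^sup>2 + r) div 2"
proof -
  obtain l0 where l0: "secant l0" "Q \<in> l0"
    using assms by (rule ex_secant_through)
  let ?LQ = "{l \<in> PG2_lines. Q \<in> l}"
  have "l0 \<in> ?LQ"
    using l0 by (simp add: secant_def)
  have zero: "card (l \<inter> B) choose 2 = 0" if "l \<in> ?LQ - {l0}" for l
  proof -
    have "\<not> secant l"
      using that secant_through_outside_unique[OF assms(2) _ l0(1) _ l0(2)] by blast
    then show ?thesis
      using that by (simp add: secant_def)
  qed
  have "secant_mult B Q = (\<Sum>l\<in>?LQ. card (l \<inter> B) choose 2)"
    by (simp add: secant_mult_def)
  also have "\<dots> = (card (l0 \<inter> B) choose 2) + (\<Sum>l\<in>?LQ - {l0}. card (l \<inter> B) choose 2)"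
    using \<open>l0 \<in> ?LQ\<close> by (intro sum.remove) simp_all
  also have "(\<Sum>l\<in>?LQ - {l0}. card (l \<inter> B) choose 2) = 0"
    using zero by (intro sum.neutral) blast
  finally have "secant_mult B Q = card (l0 \<inter> B) choose 2"
    by simp
  also have "\<dots> = (r\<^sup>2 + r) div 2"
    using card_secant[OF l0(1)] by (simp add: choose_two power2_eq_square algebra_simps)
  finally show ?thesis .
qed

lemma optimal_saturating: "optimal_saturating_1mu B (r\<^sup>2 + r + 1) ((r\<^sup>2 + r) div 2)"
proof -
  obtain Q where "Q \<in> PG2" "Q \<notin> B"
    by (rule point_outside)
  then have "B \<noteq> PG2"
    by metis
  then show ?thesis
    using subset_PG2 card_subplane spans secant_mult_outside
    by (simp add: optimal_saturating_1mu_def saturating_1mu_def)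
qed

end

section \<open>Codes given by a parity-check matrix\<close>

definition syndrome :: "nat \<Rightarrow> (nat \<Rightarrow> 'a::field ^ 3) \<Rightarrow> (nat \<Rightarrow> 'a) \<Rightarrow> 'a ^ 3" where
  "syndrome n h x = (\<Sum>i<n. x i *s h i)"

definition support :: "nat \<Rightarrow> (nat \<Rightarrow> 'a::zero) \<Rightarrow> nat set" where
  "support n x = {i. i < n \<and> x i \<noteq> 0}"

definition weight :: "nat \<Rightarrow> (nat \<Rightarrow> 'a::zero) \<Rightarrow> nat" where
  "weight n x = card (support n x)"

lemma mem_parity_check_code_iff:
  "x \<in> parity_check_code n h \<longleftrightarrow> x \<in> words n \<and> syndrome n h x = 0"
  by (simp add: parity_check_code_def syndrome_def)

lemma syndrome_add: "syndrome n h (\<lambda>i. x i + y i) = syndrome n h x + syndrome n h y"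
  by (simp add: syndrome_def vector_sadd_rdistrib sum.distrib)

lemma syndrome_diff: "syndrome n h (\<lambda>i. x i - y i) = syndrome n h x - syndrome n h y"
  by (simp add: syndrome_def vector_sub_rdistrib sum_subtractf)

lemma syndrome_scale: "syndrome n h (\<lambda>i. c * x i) = c *s syndrome n h x"
  by (simp add: syndrome_def vec_eq_iff sum_distrib_left mult.assoc)

lemma syndrome_zero [simp]: "syndrome n h (\<lambda>_. 0) = 0"
  by (simp add: syndrome_def)

lemma support_subset: "support n x \<subseteq> {..<n}"
  by (auto simp: support_def)

lemma finite_support [simp]: "finite (support n x)"
  using finite_subset[OF support_subset] by blast

lemma syndrome_eq_sum_support:
  assumes "support n x \<subseteq> S" "S \<subseteq> {..<n}"
  shows "syndrome n h x = (\<Sum>i\<in>S. x i *s h i)"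
  unfolding syndrome_def
  by (rule sum.mono_neutral_right) (use assms in \<open>auto simp: support_def\<close>)

lemma support_eq_empty_iff:
  assumes "x \<in> words n"
  shows "support n x = {} \<longleftrightarrow> x = (\<lambda>_. 0)"
  using assms by (auto simp: support_def words_def fun_eq_iff not_less[symmetric])

lemma weight_zero [simp]: "weight n (\<lambda>_. 0) = 0"
  by (simp add: weight_def support_def)

lemma weight_le_card: "support n x \<subseteq> S \<Longrightarrow> finite S \<Longrightarrow> weight n x \<le> card S"
  by (simp add: weight_def card_mono)

lemma weight_le_length: "weight n x \<le> n"
proof -
  have "weight n x \<le> card {..<n}"
    unfolding weight_def by (rule card_mono) (simp_all add: support_subset)
  then show ?thesis
    by simp
qed

lemma one_point_word:
  assumes "i < n"
  shows "(\<lambda>_. 0)(i := a) \<in> words n"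
    and "syndrome n h ((\<lambda>_. 0)(i := a)) = a *s h i"
    and "weight n ((\<lambda>_. 0)(i := a)) \<le> 1"
proof -
  have supp: "support n ((\<lambda>_. 0)(i := a)) \<subseteq> {i}"
    by (auto simp: support_def)
  show "(\<lambda>_. 0)(i := a) \<in> words n"
    using assms by (simp add: words_def)
  show "syndrome n h ((\<lambda>_. 0)(i := a)) = a *s h i"
    using assms by (subst syndrome_eq_sum_support[OF supp]) simp_all
  show "weight n ((\<lambda>_. 0)(i := a)) \<le> 1"
    using weight_le_card[OF supp] by simp
qed

lemma two_point_word:
  assumes "i < n" "j < n" "i \<noteq> j"
  shows "(\<lambda>_. 0)(i := a, j := b) \<in> words n"
    and "syndrome n h ((\<lambda>_. 0)(i := a, j := b)) = a *s h i + b *s h j"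
    and "weight n ((\<lambda>_. 0)(i := a, j := b)) \<le> 2"
proof -
  have supp: "support n ((\<lambda>_. 0)(i := a, j := b)) \<subseteq> {i, j}"
    by (auto simp: support_def)
  show "(\<lambda>_. 0)(i := a, j := b) \<in> words n"
    using assms by (simp add: words_def)
  show "syndrome n h ((\<lambda>_. 0)(i := a, j := b)) = a *s h i + b *s h j"
    using assms by (subst syndrome_eq_sum_support[OF supp]) simp_all
  have "card {i, j} \<le> 2"
    by (simp add: card_insert_if)
  then show "weight n ((\<lambda>_. 0)(i := a, j := b)) \<le> 2"
    using weight_le_card[OF supp] by simp
qed

lemma three_point_word:
  assumes "i < n" "j < n" "k < n" "i \<noteq> j" "j \<noteq> k" "i \<noteq> k"
  shows "(\<lambda>_. 0)(i := a, j := b, k := c) \<in> words n"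
    and "syndrome n h ((\<lambda>_. 0)(i := a, j := b, k := c)) = a *s h i + b *s h j + c *s h k"
    and "weight n ((\<lambda>_. 0)(i := a, j := b, k := c)) \<le> 3"
proof -
  have supp: "support n ((\<lambda>_. 0)(i := a, j := b, k := c)) \<subseteq> {i, j, k}"
    by (auto simp: support_def)
  show "(\<lambda>_. 0)(i := a, j := b, k := c) \<in> words n"
    using assms by (simp add: words_def)
  show "syndrome n h ((\<lambda>_. 0)(i := a, j := b, k := c)) = a *s h i + b *s h j + c *s h k"
    using assms by (subst syndrome_eq_sum_support[OF supp]) (simp_all add: add.assoc)
  have "card {i, j, k} \<le> 3"
    by (simp add: card_insert_if)
  then show "weight n ((\<lambda>_. 0)(i := a, j := b, k := c)) \<le> 3"
    using weight_le_card[OF supp] by simp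
qed

lemma hamming_eq_weight: "hamming n x y = weight n (\<lambda>i. x i - y i)"
  for x y :: "nat \<Rightarrow> 'a::ab_group_add"
  by (simp add: hamming_def weight_def support_def)

lemma card_words: "card (words n :: (nat \<Rightarrow> 'a::{zero,finite}) set) = CARD('a) ^ n"
proof -
  let ?cut = "\<lambda>y i. if i < n then y i else (0::'a)"
  have "bij_betw (\<lambda>x. restrict x {..<n}) (words n) (PiE {..<n} (\<lambda>_. UNIV :: 'a set))"
  proof (rule bij_betwI[where g = ?cut])
    show "?cut (restrict x {..<n}) = x" if "x \<in> words n" for x :: "nat \<Rightarrow> 'a"
      using that by (auto simp: words_def fun_eq_iff)
    show "restrict (?cut y) {..<n} = y" if "y \<in> PiE {..<n} (\<lambda>_. UNIV :: 'a set)" for y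
      using that by (auto simp: PiE_iff extensional_def fun_eq_iff)
  qed (auto simp: words_def)
  then show ?thesis
    by (simp add: bij_betw_same_card card_PiE)
qed

lemma finite_words [simp]: "finite (words n :: (nat \<Rightarrow> 'a::{zero,finite}) set)"
  using card_words[where 'a = 'a] by (metis card.infinite zero_less_card_finite
      zero_less_power less_irrefl)

lemma linear_code_parity_check_code: "linear_code n (parity_check_code n h)"
  by (auto simp: linear_code_def mem_parity_check_code_iff words_def syndrome_add syndrome_scale)

lemma card_parity_check_code:
  fixes h :: "nat \<Rightarrow> 'a::{field,finite} ^ 3"
  assumes surj: "\<And>s. \<exists>x\<in>words n. syndrome n h x = s"
  shows "card (parity_check_code n h) * CARD('a) ^ 3 = CARD('a) ^ n"
proof -
  let ?C = "parity_check_code n h"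
  have "card (words n :: (nat \<Rightarrow> 'a) set) = CARD('a ^ 3) * card ?C"
  proof (rule card_eq_card_times_fibre[where f = "syndrome n h"])
    fix s :: "'a ^ 3"
    obtain t where t: "t \<in> words n" "syndrome n h t = s"
      using surj by blast
    have "bij_betw (\<lambda>x i. x i + t i) ?C {x \<in> words n. syndrome n h x = s}"
      by (rule bij_betwI[where g = "\<lambda>x i. x i - t i"])
        (use t in \<open>auto simp: mem_parity_check_code_iff words_def syndrome_add syndrome_diff\<close>)
    then show "card {x \<in> words n. syndrome n h x = s} = card ?C"
      by (simp add: bij_betw_same_card)
  qed auto
  then show ?thesis
    by (simp add: card_words)
qed

lemma bij_betw_codewords_coset:
  assumes "x \<in> words n"
  shows "bij_betw (\<lambda>c i. x i - c i) (parity_check_code n h)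
           {e \<in> words n. syndrome n h e = syndrome n h x}"
  by (rule bij_betwI[where g = "\<lambda>e i. x i - e i"])
    (use assms in \<open>auto simp: mem_parity_check_code_iff words_def syndrome_diff\<close>)

lemma hamming_image_parity_check_code:
  assumes "x \<in> words n"
  shows "{hamming n x c | c. c \<in> parity_check_code n h}
           = {weight n e | e. e \<in> words n \<and> syndrome n h e = syndrome n h x}"
proof -
  have "{hamming n x c | c. c \<in> parity_check_code n h}
      = weight n ` (\<lambda>c i. x i - c i) ` parity_check_code n h"
    by (auto simp: hamming_eq_weight)
  also have "(\<lambda>c i. x i - c i) ` parity_check_code n h = {e \<in> words n. syndrome n h e = syndrome n h x}"
    using bij_betw_codewords_coset[OF assms] by (simp add: bij_betw_def)
  finally show ?thesis
    by blast
qed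

lemma dist_to_parity_check_code_le_iff:
  fixes h :: "nat \<Rightarrow> 'a::{field,finite} ^ 3"
  assumes "x \<in> words n"
  shows "dist_to_code n (parity_check_code n h) x \<le> k
           \<longleftrightarrow> (\<exists>e\<in>words n. syndrome n h e = syndrome n h x \<and> weight n e \<le> k)"
proof -
  let ?C = "parity_check_code n h"
  have "(\<lambda>_. 0) \<in> ?C"
    by (simp add: mem_parity_check_code_iff words_def)
  moreover have "?C \<subseteq> words n"
    by (auto simp: mem_parity_check_code_iff)
  then have "finite ?C"
    using finite_words by (rule finite_subset)
  moreover have "{hamming n x c | c. c \<in> ?C} = hamming n x ` ?C"
    by blast
  ultimately have "dist_to_code n ?C x \<le> k \<longleftrightarrow> (\<exists>m\<in>{hamming n x c | c. c \<in> ?C}. m \<le> k)"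
    unfolding dist_to_code_def by (intro Min_le_iff) auto
  also have "\<dots> \<longleftrightarrow> (\<exists>m\<in>{weight n e | e. e \<in> words n \<and> syndrome n h e = syndrome n h x}. m \<le> k)"
    by (simp only: hamming_image_parity_check_code[OF assms])
  finally show ?thesis
    by blast
qed

lemma card_codewords_at_distance:
  assumes "x \<in> words n"
  shows "card {c \<in> parity_check_code n h. hamming n x c = k}
           = card {e \<in> words n. syndrome n h e = syndrome n h x \<and> weight n e = k}"
proof -
  have "bij_betw (\<lambda>c i. x i - c i) {c \<in> parity_check_code n h. hamming n x c = k}
          {e \<in> words n. syndrome n h e = syndrome n h x \<and> weight n e = k}"
    using bij_betw_codewords_coset[OF assms, of h]
    by (auto simp: bij_betw_def inj_on_def hamming_eq_weight image_iff)
  then show ?thesis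
    by (rule bij_betw_same_card)
qed

lemma min_dist_parity_check_code:
  "min_dist n (parity_check_code n h)
     = Min {weight n z | z. z \<in> parity_check_code n h \<and> z \<noteq> (\<lambda>_. 0)}"
proof -
  have "{hamming n x y | x y. x \<in> parity_check_code n h \<and> y \<in> parity_check_code n h \<and> x \<noteq> y}
      = {weight n z | z. z \<in> parity_check_code n h \<and> z \<noteq> (\<lambda>_. 0)}"
  proof (intro set_eqI iffI; elim CollectE exE conjE)
    fix m x y assume "m = hamming n x y" "x \<in> parity_check_code n h" "y \<in> parity_check_code n h" "x \<noteq> y"
    then show "m \<in> {weight n z | z. z \<in> parity_check_code n h \<and> z \<noteq> (\<lambda>_. 0)}"
      by (intro CollectI exI[of _ "\<lambda>i. x i - y i"])
        (auto simp: hamming_eq_weight mem_parity_check_code_iff words_def syndrome_diff fun_eq_iff)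
  next
    fix m z assume "m = weight n z" "z \<in> parity_check_code n h" "z \<noteq> (\<lambda>_. 0)"
    then show "m \<in> {hamming n x y | x y. x \<in> parity_check_code n h \<and> y \<in> parity_check_code n h \<and> x \<noteq> y}"
      by (intro CollectI exI[of _ z] exI[of _ "\<lambda>_. 0"])
        (simp add: hamming_eq_weight mem_parity_check_code_iff words_def)
  qed
  then show ?thesis
    by (simp add: min_dist_def)
qed

lemma syndrome_weight_1:
  assumes "weight n x = 1"
  obtains i where "i < n" "x i \<noteq> 0" "syndrome n h x = x i *s h i"
proof -
  obtain i where i: "support n x = {i}"
    using assms by (auto simp: weight_def card_1_singleton_iff)
  then have "syndrome n h x = x i *s h i"
    using support_subset[of n x] by (subst syndrome_eq_sum_support[of n x "{i}"]) simp_all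
  moreover have "i < n" "x i \<noteq> 0"
    using i by (auto simp: support_def)
  ultimately show thesis
    by (intro that)
qed

lemma syndrome_support_2:
  assumes "support n x = {i, j}" "i \<noteq> j"
  shows "syndrome n h x = x i *s h i + x j *s h j"
  using assms support_subset[of n x] by (subst syndrome_eq_sum_support[of n x "{i, j}"]) auto

text \<open>Any two columns representing distinct points are linearly independent.\<close>

lemma parity_check_code_weight_ge_3:
  assumes h: "\<forall>i<n. h i \<noteq> 0" "inj_on (\<lambda>i. proj_point (h i)) {..<n}"
    and z: "z \<in> parity_check_code n h" "z \<noteq> (\<lambda>_. 0)"
  shows "3 \<le> weight n z"
proof (rule ccontr)
  assume "\<not> 3 \<le> weight n z"
  moreover have zw: "z \<in> words n" "syndrome n h z = 0"
    using z(1) by (simp_all add: mem_parity_check_code_iff)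
  moreover have "support n z \<noteq> {}"
    using zw(1) z(2) by (simp add: support_eq_empty_iff)
  then have "weight n z \<noteq> 0"
    by (simp add: weight_def)
  ultimately have "weight n z = 1 \<or> weight n z = 2"
    by arith
  then consider "weight n z = 1" | "weight n z = 2"
    by blast
  then show False
  proof cases
    case 1
    then obtain i where "i < n" "z i \<noteq> 0" "z i *s h i = 0"
      using zw(2) by (metis syndrome_weight_1)
    with h(1) show False
      by (auto simp: vec_eq_iff)
  next
    case 2
    then obtain i j where ij: "support n z = {i, j}" "i \<noteq> j"
      by (auto simp: weight_def card_2_iff)
    then have "i < n" "j < n" "z i \<noteq> 0" "z j \<noteq> 0"
      by (auto simp: support_def)
    moreover have "z i *s h i + z j *s h j = 0"
      using syndrome_support_2[OF ij, of h] zw(2) by simp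
    ultimately have "proj_point (h i) = proj_point (h j)"
      using proj_point_eq_if_lin_dep by blast
    with h(2) \<open>i < n\<close> \<open>j < n\<close> ij(2) show False
      by (auto dest: inj_onD)
  qed
qed

section \<open>The code of a Baer subplane\<close>

locale baer_code = baer +
  fixes h :: "nat \<Rightarrow> 'a ^ 3"
  assumes columns: "columns_of B (r\<^sup>2 + r + 1) h"
begin

abbreviation len :: nat where
  "len \<equiv> r\<^sup>2 + r + 1"

abbreviation code :: "(nat \<Rightarrow> 'a) set" where
  "code \<equiv> parity_check_code len h"

lemma column_nonzero: "i < len \<Longrightarrow> h i \<noteq> 0"
  using columns by (simp add: columns_of_def)

lemma columns_inj: "inj_on (\<lambda>i. proj_point (h i)) {..<len}"
  using columns by (simp add: columns_of_def)

lemma column_in_subplane: "i < len \<Longrightarrow> proj_point (h i) \<in> B"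
  using columns by (auto simp: columns_of_def)

lemma subplane_point_column:
  assumes "P \<in> B"
  obtains i where "i < len" "P = proj_point (h i)"
  using assms columns by (auto simp: columns_of_def)

lemma weight_ge_3: "z \<in> code \<Longrightarrow> z \<noteq> (\<lambda>_. 0) \<Longrightarrow> 3 \<le> weight len z"
  using column_nonzero columns_inj by (intro parity_check_code_weight_ge_3) simp_all

lemma syndrome_surj: "\<exists>x\<in>words len. syndrome len h x = s"
proof -
  obtain P1 P2 P3 where P: "P1 \<in> B" "P2 \<in> B" "P3 \<in> B" "P1 \<noteq> P2" "P2 \<noteq> P3" "P1 \<noteq> P3"
      "\<not> collinear3 P1 P2 P3"
    by (rule triangle)
  obtain i1 i2 i3 where i: "i1 < len" "P1 = proj_point (h i1)" "i2 < len" "P2 = proj_point (h i2)"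
      "i3 < len" "P3 = proj_point (h i3)"
    using subplane_point_column P(1-3) by metis
  then have "i1 \<noteq> i2" "i2 \<noteq> i3" "i1 \<noteq> i3"
    using P(4-6) by auto
  note x = three_point_word[OF i(1,3,5) this]
  obtain a b c where "s = a *s h i1 + b *s h i2 + c *s h i3"
    using noncollinear_lincomb[of "h i1" "h i2" "h i3"] column_nonzero i P(4,7) by metis
  then show ?thesis
    using x(1)[of a b c] x(2)[of h a b c] by (intro bexI) simp_all
qed

text \<open>Three points of B on a secant give three linearly dependent columns.\<close>

lemma ex_weight_3_codeword: "\<exists>z\<in>code. z \<noteq> (\<lambda>_. 0) \<and> weight len z = 3"
proof -
  obtain P Q where PQ: "P \<in> B" "Q \<in> B" "P \<noteq> Q"
    by (rule two_points)
  note m = secant_through_two_points[OF PQ]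
  obtain T where T: "T \<in> join P Q \<inter> B" "T \<noteq> P" "T \<noteq> Q"
    using secant_third_point[OF m(1)] m(2,3) PQ(1,2) by blast
  obtain i where i: "i < len" "P = proj_point (h i)"
    using PQ(1) by (rule subplane_point_column)
  obtain j where j: "j < len" "Q = proj_point (h j)"
    using PQ(2) by (rule subplane_point_column)
  obtain k where k: "k < len" "T = proj_point (h k)"
    using T(1) by (blast elim: subplane_point_column)
  have "i \<noteq> j" "j \<noteq> k" "i \<noteq> k"
    using PQ(3) T(2,3) i j k by auto
  note z = three_point_word[OF i(1) j(1) k(1) this]
  have "join P Q \<in> PG2_lines"
    using m(1) by (simp add: secant_def)
  then obtain a b where hk: "h k = a *s h i + b *s h j"
    using line_point_lincomb[of "join P Q" "h i" "h j" "h k"] m(2,3) T(1) PQ(3) i j k column_nonzero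
    by blast
  let ?z = "(\<lambda>_. 0)(i := a, j := b, k := -1)"
  have "?z \<in> code"
    using z(1) z(2)[of h a b "-1"] hk by (simp add: mem_parity_check_code_iff)
  moreover have "?z \<noteq> (\<lambda>_. 0)"
  proof
    assume "?z = (\<lambda>_. 0)"
    then have "?z k = 0"
      by simp
    then show False
      by simp
  qed
  ultimately show ?thesis
    using z(3) weight_ge_3 le_antisym by blast
qed

lemma min_dist_eq_3: "min_dist len code = 3"
  unfolding min_dist_parity_check_code
proof (rule Min_eqI)
  show "finite {weight len z | z. z \<in> code \<and> z \<noteq> (\<lambda>_. 0)}"
    by (rule finite_subset[of _ "{..len}"]) (auto simp: weight_le_length)
  show "3 \<le> m" if "m \<in> {weight len z | z. z \<in> code \<and> z \<noteq> (\<lambda>_. 0)}" for m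
    using that weight_ge_3 by blast
  show "3 \<in> {weight len z | z. z \<in> code \<and> z \<noteq> (\<lambda>_. 0)}"
    using ex_weight_3_codeword by force
qed

lemma card_code: "card code = CARD('a) ^ (len - 3)"
proof -
  have "len = (len - 3) + 3"
    using order_ge_2 by simp
  then have "card code * CARD('a) ^ 3 = CARD('a) ^ (len - 3) * CARD('a) ^ 3"
    using card_parity_check_code[OF syndrome_surj] by (metis power_add)
  then show ?thesis
    by simp
qed

lemma syndrome_weight_le_1:
  assumes "e \<in> words len" "weight len e \<le> 1"
  shows "syndrome len h e = 0 \<or> proj_point (syndrome len h e) \<in> B"
proof -
  consider "weight len e = 0" | "weight len e = 1"
    using assms(2) by linarith
  then show ?thesis
  proof cases
    case 1
    then have "e = (\<lambda>_. 0)"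
      using support_eq_empty_iff[OF assms(1)] by (simp add: weight_def)
    then show ?thesis
      by simp
  next
    case 2
    then obtain i where i: "i < len" "e i \<noteq> 0" "syndrome len h e = e i *s h i"
      by (rule syndrome_weight_1)
    then have "proj_point (syndrome len h e) = proj_point (h i)"
      by (simp add: proj_point_smult)
    then show ?thesis
      using column_in_subplane[OF i(1)] by simp
  qed
qed

lemma ex_weight_1_coset_word:
  assumes "proj_point s \<in> B"
  shows "\<exists>e\<in>words len. syndrome len h e = s \<and> weight len e \<le> 1"
proof -
  obtain i where i: "i < len" "proj_point s = proj_point (h i)"
    using assms by (rule subplane_point_column)
  then obtain c where "s = c *s h i"
    by (auto simp: proj_point_eq_iff mem_proj_point_iff)
  then have "syndrome len h ((\<lambda>_. 0)(i := c)) = s"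
    using one_point_word(2)[OF i(1)] by simp
  show ?thesis
  proof (rule bexI)
    show "syndrome len h ((\<lambda>_. 0)(i := c)) = s \<and> weight len ((\<lambda>_. 0)(i := c)) \<le> 1"
      using \<open>syndrome len h _ = s\<close> one_point_word(3)[OF i(1)] by (rule conjI)
    show "(\<lambda>_. 0)(i := c) \<in> words len"
      using i(1) by (rule one_point_word(1))
  qed
qed

lemma coset_weight_le_1_iff:
  "(\<exists>e\<in>words len. syndrome len h e = s \<and> weight len e \<le> 1) \<longleftrightarrow> s = 0 \<or> proj_point s \<in> B"
proof
  assume "\<exists>e\<in>words len. syndrome len h e = s \<and> weight len e \<le> 1"
  then show "s = 0 \<or> proj_point s \<in> B"
    using syndrome_weight_le_1 by blast
next
  assume "s = 0 \<or> proj_point s \<in> B"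
  then show "\<exists>e\<in>words len. syndrome len h e = s \<and> weight len e \<le> 1"
    using ex_weight_1_coset_word by (auto intro!: bexI[of _ "\<lambda>_. 0"] simp: words_def)
qed

lemma coset_weight_le_2: "\<exists>e\<in>words len. syndrome len h e = s \<and> weight len e \<le> 2"
proof (cases "s = 0 \<or> proj_point s \<in> B")
  case True
  then obtain e where "e \<in> words len" "syndrome len h e = s" "weight len e \<le> 1"
    using coset_weight_le_1_iff by blast
  then show ?thesis
    by (intro bexI[of _ e]) simp_all
next
  case False
  then have s: "s \<noteq> 0" "proj_point s \<notin> B"
    by simp_all
  then obtain l where l: "secant l" "proj_point s \<in> l"
    using ex_secant_through proj_point_in_PG2 by blast
  then obtain P Q where PQ: "P \<in> l \<inter> B" "Q \<in> l \<inter> B" "P \<noteq> Q"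
    unfolding secant_iff by blast
  obtain i where i: "i < len" "P = proj_point (h i)"
    using PQ(1) by (blast elim: subplane_point_column)
  obtain j where j: "j < len" "Q = proj_point (h j)"
    using PQ(2) by (blast elim: subplane_point_column)
  have "l \<in> PG2_lines"
    using l(1) by (simp add: secant_def)
  then obtain a b where "s = a *s h i + b *s h j"
    using line_point_lincomb[of l "h i" "h j" s] l(2) s(1) PQ i j column_nonzero by blast
  moreover have "i \<noteq> j"
    using i j PQ(3) by auto
  ultimately have "syndrome len h ((\<lambda>_. 0)(i := a, j := b)) = s"
    using two_point_word(2)[OF i(1) j(1), of h a b] by simp
  show ?thesis
  proof (rule bexI)
    show "syndrome len h ((\<lambda>_. 0)(i := a, j := b)) = s \<and> weight len ((\<lambda>_. 0)(i := a, j := b)) \<le> 2"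
      using \<open>syndrome len h _ = s\<close> two_point_word(3)[OF i(1) j(1) \<open>i \<noteq> j\<close>] by (rule conjI)
    show "(\<lambda>_. 0)(i := a, j := b) \<in> words len"
      using i(1) j(1) \<open>i \<noteq> j\<close> by (rule two_point_word(1))
  qed
qed

lemma dist_to_code_eq_2_iff:
  assumes "x \<in> words len"
  shows "dist_to_code len code x = 2 \<longleftrightarrow> syndrome len h x \<noteq> 0 \<and> proj_point (syndrome len h x) \<notin> B"
proof -
  have "dist_to_code len code x \<le> 2"
    using dist_to_parity_check_code_le_iff[OF assms] coset_weight_le_2 by blast
  moreover have "dist_to_code len code x \<le> 1 \<longleftrightarrow> syndrome len h x = 0 \<or> proj_point (syndrome len h x) \<in> B"
    using dist_to_parity_check_code_le_iff[OF assms] coset_weight_le_1_iff by blast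
  ultimately show ?thesis
    by auto
qed

lemma covering_radius_eq_2: "covering_radius len code = 2"
  unfolding covering_radius_def
proof (rule Max_eqI)
  show "finite {dist_to_code len code x | x. x \<in> words len}"
    using finite_words by (simp add: setcompr_eq_image)
  show "y \<le> 2" if "y \<in> {dist_to_code len code x | x. x \<in> words len}" for y
    using that dist_to_parity_check_code_le_iff coset_weight_le_2 by blast
  obtain Q where Q: "Q \<in> PG2" "Q \<notin> B"
    by (rule point_outside)
  obtain s where "s \<noteq> 0" "Q = proj_point s"
    using Q(1) by (rule PG2E)
  moreover obtain x where "x \<in> words len" "syndrome len h x = s"
    using syndrome_surj by blast
  ultimately have "dist_to_code len code x = 2"
    using Q(2) dist_to_code_eq_2_iff by simp
  then show "2 \<in> {dist_to_code len code x | x. x \<in> words len}"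
    using \<open>x \<in> words len\<close> by (intro CollectI exI[of _ x]) simp
qed

lemma coset_support_on_secant:
  assumes s: "s \<noteq> 0" "proj_point s \<notin> B" and l: "secant l" "proj_point s \<in> l"
    and e: "syndrome len h e = s" "support len e = {i, j}" "i \<noteq> j"
  shows "proj_point (h i) \<in> l" "proj_point (h j) \<in> l"
proof -
  have ij: "i < len" "j < len"
    using e(2) support_subset[of len e] by auto
  have "s = e i *s h i + e j *s h j"
    using syndrome_support_2[OF e(2,3), of h] e(1) by simp
  have pne: "proj_point (h i) \<noteq> proj_point (h j)"
  proof
    assume "proj_point (h i) = proj_point (h j)"
    then have "i = j"
      using inj_onD[OF columns_inj] ij by simp
    with e(3) show False
      by contradiction
  qed
  let ?m = "line_of (crossp (h i) (h j))"
  note m = line_of_crossp[OF column_nonzero[OF ij(1)] column_nonzero[OF ij(2)] pne]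
  have "proj_point s \<in> ?m"
    using s(1) \<open>s = _\<close> by (simp add: proj_point_in_line_of_iff)
  moreover have "secant ?m"
    unfolding secant_iff using m column_in_subplane ij pne by blast
  ultimately have "?m = l"
    using secant_through_outside_unique[OF s(2) _ l(1) _ l(2)] by blast
  then show "proj_point (h i) \<in> l" "proj_point (h j) \<in> l"
    using m by simp_all
qed

lemma card_columns_on_secant:
  assumes "secant l"
  shows "card {i. i < len \<and> proj_point (h i) \<in> l} = r + 1"
proof -
  let ?I = "{i. i < len \<and> proj_point (h i) \<in> l}"
  have "bij_betw (\<lambda>i. proj_point (h i)) ?I (l \<inter> B)"
  proof (rule bij_betw_imageI)
    show "inj_on (\<lambda>i. proj_point (h i)) ?I"
      using columns_inj by (rule inj_on_subset) blast
    show "(\<lambda>i. proj_point (h i)) ` ?I = l \<inter> B"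
    proof (intro set_eqI iffI)
      fix P assume "P \<in> (\<lambda>i. proj_point (h i)) ` ?I"
      then obtain i where "i < len" "proj_point (h i) \<in> l" "P = proj_point (h i)"
        by blast
      then show "P \<in> l \<inter> B"
        using column_in_subplane by simp
    next
      fix P assume P: "P \<in> l \<inter> B"
      then obtain i where i: "i < len" "P = proj_point (h i)"
        by (blast elim: subplane_point_column)
      then have "i \<in> ?I"
        using P by simp
      then show "P \<in> (\<lambda>i. proj_point (h i)) ` ?I"
        unfolding i(2) by (rule imageI)
    qed
  qed
  then show ?thesis
    using card_secant[OF assms] by (simp add: bij_betw_same_card)
qed

lemma coset_eq_if_support_eq:
  assumes "e \<in> words len" "e' \<in> words len" "syndrome len h e = syndrome len h e'"
    and "support len e = support len e'" "weight len e \<le> 2"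
  shows "e = e'"
proof -
  let ?d = "\<lambda>i. e i - e' i"
  have "?d \<in> code"
    using assms(1-3) by (simp add: mem_parity_check_code_iff words_def syndrome_diff)
  have "support len ?d \<subseteq> support len e"
  proof
    fix i assume "i \<in> support len ?d"
    then have i: "i < len" "e i \<noteq> e' i"
      by (simp_all add: support_def)
    show "i \<in> support len e"
    proof (rule ccontr)
      assume "i \<notin> support len e"
      moreover from this have "i \<notin> support len e'"
        using assms(4) by simp
      ultimately have "e i = 0" "e' i = 0"
        using i(1) by (simp_all add: support_def)
      with i(2) show False
        by simp
    qed
  qed
  then have "weight len ?d \<le> weight len e"
    unfolding weight_def by (rule card_mono[rotated]) simp
  then have "weight len ?d \<le> 2"
    using assms(5) by simp
  have "?d = (\<lambda>_. 0)"
  proof (rule ccontr)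
    assume "?d \<noteq> (\<lambda>_. 0)"
    with \<open>?d \<in> code\<close> have "3 \<le> weight len ?d"
      by (rule weight_ge_3)
    with \<open>weight len ?d \<le> 2\<close> show False
      by simp
  qed
  then show "e = e'"
    by (simp add: fun_eq_iff)
qed

lemma ex_coset_word_with_support:
  assumes s: "s \<noteq> 0" "proj_point s \<notin> B" and l: "secant l" "proj_point s \<in> l"
    and ij: "i < len" "j < len" "i \<noteq> j" "proj_point (h i) \<in> l" "proj_point (h j) \<in> l"
  obtains e where "e \<in> words len" "syndrome len h e = s" "support len e = {i, j}"
proof -
  have pne: "proj_point (h i) \<noteq> proj_point (h j)"
    using inj_onD[OF columns_inj] ij(1-3) by blast
  have "l \<in> PG2_lines"
    using l(1) by (simp add: secant_def)
  then obtain a b where ab: "s = a *s h i + b *s h j"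
    using line_point_lincomb[OF _ column_nonzero[OF ij(1)] column_nonzero[OF ij(2)] pne ij(4,5) s(1) l(2)]
    by blast
  have "a \<noteq> 0"
  proof
    assume "a = 0"
    then have "b \<noteq> 0" "s = b *s h j"
      using ab s(1) by simp_all
    then have "proj_point s = proj_point (h j)"
      by (simp add: proj_point_smult)
    with s(2) column_in_subplane[OF ij(2)] show False
      by simp
  qed
  moreover have "b \<noteq> 0"
  proof
    assume "b = 0"
    then have "a \<noteq> 0" "s = a *s h i"
      using ab s(1) by simp_all
    then have "proj_point s = proj_point (h i)"
      by (simp add: proj_point_smult)
    with s(2) column_in_subplane[OF ij(1)] show False
      by simp
  qed
  ultimately have "support len ((\<lambda>_. 0)(i := a, j := b)) = {i, j}"
    using ij(1-3) by (auto simp: support_def)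
  then show thesis
    using that two_point_word(1)[OF ij(1-3), of a b] two_point_word(2)[OF ij(1-3), of h a b] ab
    by simp
qed

lemma support_image_weight_2_coset:
  assumes s: "s \<noteq> 0" "proj_point s \<notin> B" and l: "secant l" "proj_point s \<in> l"
  shows "support len ` {e \<in> words len. syndrome len h e = s \<and> weight len e = 2}
           = {T. T \<subseteq> {i. i < len \<and> proj_point (h i) \<in> l} \<and> card T = 2}"
proof (intro set_eqI iffI)
  fix T assume "T \<in> support len ` {e \<in> words len. syndrome len h e = s \<and> weight len e = 2}"
  then obtain e where e: "e \<in> words len" "syndrome len h e = s" "weight len e = 2" "T = support len e"
    by blast
  then have "card T = 2"
    by (simp add: weight_def)
  then obtain i j where ij: "T = {i, j}" "i \<noteq> j"
    by (auto simp: card_2_iff)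
  then have "proj_point (h i) \<in> l" "proj_point (h j) \<in> l"
    using coset_support_on_secant[OF s l, of e i j] e by simp_all
  moreover have "i < len" "j < len"
    using e(4) ij support_subset[of len e] by auto
  ultimately show "T \<in> {T. T \<subseteq> {i. i < len \<and> proj_point (h i) \<in> l} \<and> card T = 2}"
    using ij \<open>card T = 2\<close> by simp
next
  fix T assume "T \<in> {T. T \<subseteq> {i. i < len \<and> proj_point (h i) \<in> l} \<and> card T = 2}"
  then obtain i j where T: "T = {i, j}" "i \<noteq> j" "i < len" "j < len"
      "proj_point (h i) \<in> l" "proj_point (h j) \<in> l"
    by (auto simp: card_2_iff)
  then obtain e where "e \<in> words len" "syndrome len h e = s" "support len e = {i, j}"
    using ex_coset_word_with_support[OF s l] by blast
  moreover from this have "weight len e = 2"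
    using T(2) by (simp add: weight_def)
  ultimately show "T \<in> support len ` {e \<in> words len. syndrome len h e = s \<and> weight len e = 2}"
    unfolding T(1) by blast
qed

lemma card_weight_2_coset:
  assumes s: "s \<noteq> 0" "proj_point s \<notin> B"
  shows "card {e \<in> words len. syndrome len h e = s \<and> weight len e = 2} = (r\<^sup>2 + r) div 2"
    (is "card ?E = _")
proof -
  obtain l where l: "secant l" "proj_point s \<in> l"
    using ex_secant_through proj_point_in_PG2 s by blast
  let ?I = "{i. i < len \<and> proj_point (h i) \<in> l}"
  have "inj_on (support len) ?E"
    by (rule inj_onI) (rule coset_eq_if_support_eq, simp_all)
  then have "card ?E = card {T. T \<subseteq> ?I \<and> card T = 2}"
    using card_image support_image_weight_2_coset[OF s l] by fastforce
  also have "\<dots> = card ?I choose 2"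
    by (rule n_subsets) simp
  also have "\<dots> = (r\<^sup>2 + r) div 2"
    using card_columns_on_secant[OF l(1)] by (simp add: choose_two power2_eq_square algebra_simps)
  finally show ?thesis .
qed

lemma APMCF_code: "APMCF len code 2 ((r\<^sup>2 + r) div 2)"
  unfolding APMCF_def
proof (intro conjI ballI impI covering_radius_eq_2)
  fix x assume x: "x \<in> words len" "dist_to_code len code x = 2"
  have "card {c \<in> code. hamming len x c = 2}
      = card {e \<in> words len. syndrome len h e = syndrome len h x \<and> weight len e = 2}"
    by (rule card_codewords_at_distance[OF x(1)])
  also have "\<dots> = (r\<^sup>2 + r) div 2"
    using x dist_to_code_eq_2_iff by (intro card_weight_2_coset) simp_all
  finally show "card {c \<in> code. hamming len x c = 2} = (r\<^sup>2 + r) div 2" .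
qed

end

theorem proposition5p4:
  fixes B :: "(('a::{field,finite}) ^ 3) set set" and r :: nat
  assumes "CARD('a) = r ^ 2"
    and "baer_subplane B"
  shows "optimal_saturating_1mu B (r ^ 2 + r + 1) ((r ^ 2 + r) div 2)
     \<and> (\<forall>h. columns_of B (r ^ 2 + r + 1) h \<longrightarrow>
          nkd_code (r ^ 2 + r + 1) (r ^ 2 + r + 1 - 3) 3 (parity_check_code (r ^ 2 + r + 1) h)
          \<and> covering_radius (r ^ 2 + r + 1) (parity_check_code (r ^ 2 + r + 1) h) = 2
          \<and> APMCF (r ^ 2 + r + 1) (parity_check_code (r ^ 2 + r + 1) h) 2 ((r ^ 2 + r) div 2))"
proof -
  obtain r' where r': "CARD('a) = r'\<^sup>2" "subplane_of_order B r'"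
    using assms(2) by (auto simp: baer_subplane_def)
  with assms(1) have "subplane_of_order B r"
    using power2_eq_imp_eq[of r' r] by simp
  interpret baer B r
    by unfold_locales (fact \<open>subplane_of_order B r\<close>, fact assms(1))
  have "nkd_code (r\<^sup>2 + r + 1) (r\<^sup>2 + r + 1 - 3) 3 (parity_check_code (r\<^sup>2 + r + 1) h)
      \<and> covering_radius (r\<^sup>2 + r + 1) (parity_check_code (r\<^sup>2 + r + 1) h) = 2
      \<and> APMCF (r\<^sup>2 + r + 1) (parity_check_code (r\<^sup>2 + r + 1) h) 2 ((r\<^sup>2 + r) div 2)"
    if "columns_of B (r\<^sup>2 + r + 1) h" for h
  proof -
    interpret baer_code B r h
      using that by unfold_locales
    show ?thesis
      using linear_code_parity_check_code card_code min_dist_eq_3 covering_radius_eq_2 APMCF_code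
      by (simp add: nkd_code_def code_dim_def)
  qed
  then show ?thesis
    using optimal_saturating by blast
qed

end
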